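(* Let $F$ be a field and $n\ge 2$ an integer. Then the matrix ring $\mathbb{M}_n(F)$ does not have the $2$-nil-sum property.
   Context: All rings are associative with identity. A central unit of $R$ is a unit of $R$ lying in the center of $R$; a non central-unit is an element that is not a central unit. A ring $R$ has the $2$-nil-sum property if every non central-unit of $R$ is a sum of two nilpotent elements of $R$. *)

theory Defs
  imports "Jordan_Normal_Form.Matrix" "HOL-Algebra.Ring"
begin

definition nilpotent_elem :: "('a, 'b) ring_scheme \<Rightarrow> 'a \<Rightarrow> bool" where
  "nilpotent_elem R x \<longleftrightarrow> x \<in> carrier R \<and> (\<exists>k::nat. x [^]\<^bsub>R\<^esub> k = \<zero>\<^bsub>R\<^esub>)"

definition central_unit :: "('a, 'b) ring_scheme \<Rightarrow> 'a \<Rightarrow> bool" where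
  "central_unit R x \<longleftrightarrow> x \<in> Units R \<and> (\<forall>y\<in>carrier R. x \<otimes>\<^bsub>R\<^esub> y = y \<otimes>\<^bsub>R\<^esub> x)"

definition two_nil_sum :: "('a, 'b) ring_scheme \<Rightarrow> bool" where
  "two_nil_sum R \<longleftrightarrow>
     (\<forall>x\<in>carrier R. \<not> central_unit R x \<longrightarrow>
        (\<exists>a b. nilpotent_elem R a \<and> nilpotent_elem R b \<and> x = a \<oplus>\<^bsub>R\<^esub> b))"

end

theory Submission
  imports Defs "Jordan_Normal_Form.Determinant"
begin

text \<open>Nilpotent matrices over a field have trace zero, so a sum of two nilpotent matrices has
trace zero as well; the matrix unit \<open>E\<^sub>0\<^sub>0\<close> has trace one and, for \<open>n \<ge> 2\<close>, is not invertible.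
For the trace of a nilpotent \<open>A\<close> we pass to \<open>F[X]\<close>: since \<open>X A\<close> is nilpotent, \<open>1 - X A\<close> is
invertible over \<open>F[X]\<close>, so \<open>det (1 - X A)\<close> is a unit, i.e. a constant polynomial; but its
coefficient of \<open>X\<close> is \<open>- tr A\<close>.\<close>

lemma (in ring) geometric_sum_complement:
  assumes a: "a \<in> carrier R" and b: "b \<in> carrier R" and ab: "a \<oplus> b = \<one>"
  shows "a \<otimes> (\<Oplus>i\<in>{..<m}. b [^] i) \<oplus> b [^] (m::nat) = \<one>"
proof (induction m)
  case 0
  show ?case using a by simp
next
  case (Suc m)
  let ?S = "\<Oplus>i\<in>{..<m}. b [^] i"
  have S: "?S \<in> carrier R" using b by simp
  have split: "a \<otimes> b [^] m \<oplus> b [^] Suc m = b [^] m"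
    using a b ab l_distr[of a b "b [^] m"] nat_pow_comm[of b m 1] by simp
  have "a \<otimes> (\<Oplus>i\<in>{..<Suc m}. b [^] i) \<oplus> b [^] Suc m
      = (a \<otimes> b [^] m \<oplus> b [^] Suc m) \<oplus> a \<otimes> ?S"
    using a b S by (simp add: lessThan_Suc r_distr a_ac)
  also have "\<dots> = \<one>"
    using Suc a S b by (simp only: split) (simp add: a_comm)
  finally show ?case .
qed

lemma (in ring) complement_of_nilpotent_right_invertible:
  assumes a: "a \<in> carrier R" and b: "b \<in> carrier R" and ab: "a \<oplus> b = \<one>"
    and nil: "b [^] (k::nat) = \<zero>"
  shows "\<exists>c\<in>carrier R. a \<otimes> c = \<one>"
  using geometric_sum_complement[OF a b ab, of k] nil a b
  by (intro bexI[of _ "\<Oplus>i\<in>{..<k}. b [^] i"]) auto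

lemma permutes_moves_other_point:
  assumes p: "p permutes S" and "p \<noteq> id"
  shows "\<exists>i\<in>S - {j}. p i \<noteq> i"
proof -
  obtain i where i: "p i \<noteq> i" using \<open>p \<noteq> id\<close> by (metis eq_id_iff)
  then have "i \<in> S" using p permutes_not_in by fastforce
  show ?thesis
  proof (cases "i = j")
    case False
    then show ?thesis using i \<open>i \<in> S\<close> by auto
  next
    case True
    have "p (p i) \<noteq> p i" using i permutes_inj[OF p] by (metis injD)
    then show ?thesis using True i \<open>i \<in> S\<close> permutes_in_image[OF p] by auto
  qed
qed

lemma smult_pow_mat:
  assumes "A \<in> carrier_mat n n"
  shows "(c \<cdot>\<^sub>m A) ^\<^sub>m k = (c ^ k :: 'a::comm_semiring_1) \<cdot>\<^sub>m A ^\<^sub>m k"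
proof (induction k)
  case 0
  show ?case using assms by (auto intro!: eq_matI)
next
  case (Suc k)
  then show ?case using assms
    by (auto simp: mult_smult_distrib[of _ n n] mult_smult_assoc_mat[of _ n n] mult.assoc intro!: eq_matI)
qed

lemma coeff_prod_linear_polys:
  fixes c d :: "'b \<Rightarrow> 'a::comm_ring_1"
  assumes "finite S"
  shows "coeff (\<Prod>i\<in>S. [:c i, d i:]) 0 = (\<Prod>i\<in>S. c i) \<and>
         coeff (\<Prod>i\<in>S. [:c i, d i:]) 1 = (\<Sum>j\<in>S. d j * (\<Prod>i\<in>S - {j}. c i))"
  using assms
proof (induction S rule: finite_induct)
  case empty
  then show ?case by simp
next
  case (insert x F)
  have "(\<Sum>j\<in>F. d j * (\<Prod>i\<in>insert x F - {j}. c i)) = c x * (\<Sum>j\<in>F. d j * (\<Prod>i\<in>F - {j}. c i))"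
    unfolding sum_distrib_left
  proof (rule sum.cong)
    fix j
    assume "j \<in> F"
    then have "insert x F - {j} = insert x (F - {j})" using insert by auto
    then show "d j * (\<Prod>i\<in>insert x F - {j}. c i) = c x * (d j * (\<Prod>i\<in>F - {j}. c i))"
      using insert by (simp add: ac_simps)
  qed simp
  moreover have "insert x F - {x} = F" using insert by auto
  ultimately show ?case using insert
    by (simp add: coeff_mult numeral_eq_Suc algebra_simps)
qed

definition mat_trace :: "'a::comm_monoid_add mat \<Rightarrow> 'a" where
  "mat_trace A = (\<Sum>i<dim_row A. A $$ (i, i))"

lemma mat_trace_add:
  assumes "A \<in> carrier_mat n n" and "B \<in> carrier_mat n n"
  shows "mat_trace (A + B) = mat_trace A + mat_trace B"
  using assms by (simp add: mat_trace_def sum.distrib)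

definition one_minus_X_mat :: "'a::comm_ring_1 mat \<Rightarrow> 'a poly mat" where
  "one_minus_X_mat A = mat (dim_row A) (dim_row A) (\<lambda>(i, j). [:of_bool (i = j), - A $$ (i, j):])"

lemma one_minus_X_mat_add_X_smult:
  assumes "A \<in> carrier_mat n n"
  shows "one_minus_X_mat A + [:0, 1:] \<cdot>\<^sub>m map_mat (\<lambda>a. [:a:]) A = 1\<^sub>m n"
  using assms by (auto simp: one_minus_X_mat_def intro!: eq_matI)

lemma coeff_det_one_minus_X_mat:
  assumes A: "A \<in> carrier_mat n n"
  shows "coeff (det (one_minus_X_mat A)) 1 = - mat_trace A"
proof -
  let ?M = "one_minus_X_mat A"
  have M: "?M \<in> carrier_mat n n" using A by (simp add: one_minus_X_mat_def)
  have summand: "coeff (signof p * (\<Prod>i = 0..<n. ?M $$ (i, p i))) 1 =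
      (if p = id then - mat_trace A else 0)" if p: "p permutes {0..<n}" for p
  proof -
    have "(\<Prod>i = 0..<n. ?M $$ (i, p i)) = (\<Prod>i = 0..<n. [:of_bool (i = p i), - A $$ (i, p i):])"
      using A permutes_in_image[OF p] by (intro prod.cong) (auto simp: one_minus_X_mat_def)
    then have "coeff (signof p * (\<Prod>i = 0..<n. ?M $$ (i, p i))) 1 =
        signof p * (\<Sum>j\<in>{0..<n}. - A $$ (j, p j) * (\<Prod>i\<in>{0..<n} - {j}. of_bool (i = p i)))"
      using coeff_prod_linear_polys[of "{0..<n}" "\<lambda>i. of_bool (i = p i)" "\<lambda>i. - A $$ (i, p i)"]
      by (cases p rule: sign_cases) simp_all
    also have "\<dots> = (if p = id then - mat_trace A else 0)"
    proof (cases "p = id")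
      case True
      then show ?thesis using A by (simp add: mat_trace_def sum_negf atLeast0LessThan)
    next
      case False
      have "(\<Prod>i\<in>{0..<n} - {j}. of_bool (i = p i) :: 'a) = 0" for j
      proof -
        obtain i where "i \<in> {0..<n} - {j}" and "p i \<noteq> i"
          using permutes_moves_other_point[OF p False] by blast
        then show ?thesis by (intro prod_zero) force+
      qed
      then show ?thesis using False by simp
    qed
    finally show ?thesis .
  qed
  have "coeff (det ?M) 1 = (\<Sum>p | p permutes {0..<n}. coeff (signof p * (\<Prod>i = 0..<n. ?M $$ (i, p i))) 1)"
    unfolding det_def'[OF M] by (simp add: coeff_sum)
  also have "\<dots> = (\<Sum>p | p permutes {0..<n}. if p = id then - mat_trace A else 0)"
    using summand by (intro sum.cong) simp_all
  also have "\<dots> = - mat_trace A"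
    by (simp add: sum.delta' permutes_id finite_permutations)
  finally show ?thesis .
qed

lemma mat_trace_nilpotent:
  fixes A :: "'a::field mat"
  assumes A: "A \<in> carrier_mat n n" and nil: "A ^\<^sub>m k = 0\<^sub>m n n"
  shows "mat_trace A = 0"
proof -
  interpret const: semiring_hom "\<lambda>a::'a. [:a:]"
    by unfold_locales (auto simp: one_pCons)
  interpret R: ring "ring_mat TYPE('a poly) n ()"
    by (rule ring_mat)
  define B where "B = [:0, 1:] \<cdot>\<^sub>m map_mat (\<lambda>a. [:a:]) A"
  let ?M = "one_minus_X_mat A"
  have B: "B \<in> carrier_mat n n" and M: "?M \<in> carrier_mat n n"
    using A by (simp_all add: B_def one_minus_X_mat_def)
  have "B ^\<^sub>m k = 0\<^sub>m n n"
    using A nil by (auto simp: B_def smult_pow_mat const.mat_hom_pow[symmetric] intro!: eq_matI)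
  then have "B [^]\<^bsub>ring_mat TYPE('a poly) n ()\<^esub> k = \<zero>\<^bsub>ring_mat TYPE('a poly) n ()\<^esub>"
    using pow_mat_ring_pow[OF B, of k "()"] by (simp add: ring_mat_simps)
  then obtain C where C: "C \<in> carrier_mat n n" and "?M * C = 1\<^sub>m n"
    using R.complement_of_nilpotent_right_invertible[of ?M B k] M B
      one_minus_X_mat_add_X_smult[OF A]
    by (auto simp: ring_mat_simps B_def)
  then have "det ?M * det C = 1"
    using det_mult[OF M C] by simp
  then obtain e where "det ?M = [:e:]"
    using is_unit_poly_iff by (metis dvdI)
  then show ?thesis
    using coeff_det_one_minus_X_mat[OF A] by simp
qed

lemma mat_trace_nilpotent_elem:
  assumes "nilpotent_elem (ring_mat TYPE('a::field) n ()) A"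
  shows "A \<in> carrier_mat n n" and "mat_trace A = 0"
proof -
  from assms obtain k where A: "A \<in> carrier_mat n n"
    and "A [^]\<^bsub>ring_mat TYPE('a) n ()\<^esub> (k::nat) = \<zero>\<^bsub>ring_mat TYPE('a) n ()\<^esub>"
    unfolding nilpotent_elem_def by (auto simp: ring_mat_simps)
  then have "A ^\<^sub>m k = 0\<^sub>m n n"
    using pow_mat_ring_pow[OF A, of k "()"] by (simp add: ring_mat_simps)
  then show "A \<in> carrier_mat n n" and "mat_trace A = 0"
    using A mat_trace_nilpotent by blast+
qed

theorem mainTheorem6:
  fixes n :: nat
  assumes "n \<ge> 2"
  shows "\<not> two_nil_sum (ring_mat TYPE('a::field) n ())"
proof
  assume nil_sum: "two_nil_sum (ring_mat TYPE('a::field) n ())"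
  define E :: "'a mat" where "E = mat n n (\<lambda>(i, j). of_bool (i = 0 \<and> j = 0))"
  have E: "E \<in> carrier_mat n n" unfolding E_def by simp
  have "\<not> central_unit (ring_mat TYPE('a) n ()) E"
  proof
    assume "central_unit (ring_mat TYPE('a) n ()) E"
    then obtain C where C: "C \<in> carrier_mat n n" and "E * C = 1\<^sub>m n"
      unfolding central_unit_def Units_def by (auto simp: ring_mat_simps)
    moreover have "(E * C) $$ (1, 1) = 0"
      using assms C by (auto simp: E_def scalar_prod_def intro!: sum.neutral)
    ultimately show False using assms by simp
  qed
  then obtain A B where A: "nilpotent_elem (ring_mat TYPE('a) n ()) A"
    and B: "nilpotent_elem (ring_mat TYPE('a) n ()) B" and "E = A + B"
    using nil_sum E unfolding two_nil_sum_def by (auto simp: ring_mat_simps)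
  then have "mat_trace E = 0"
    using mat_trace_add[OF mat_trace_nilpotent_elem(1)[OF A] mat_trace_nilpotent_elem(1)[OF B]]
      mat_trace_nilpotent_elem(2)[OF A] mat_trace_nilpotent_elem(2)[OF B] by simp
  moreover have "mat_trace E = (\<Sum>i<n. of_bool (i = 0))"
    unfolding mat_trace_def E_def by (intro sum.cong) auto
  ultimately show False
    using assms by simp
qed

end
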